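(* Let $\mathcal G=(G_n)$ be an expander sequence and let $I_t=I_t^{(pp)}$ for push\&pull on $G_n$ with transmission success probability $q\in(0,1)$, and suppose $|I_t|\le n/2$. Then for $\tau=\log n/(q-\log(1-q))$ and all $c<1$, whp $|I_{t+c\tau}|<n$.
   Context: push\&pull protocol: in each synchronous round every vertex chooses a neighbour independently and uniformly at random; an informed vertex informs its chosen neighbour (push) and an uninformed vertex that chose an informed neighbour becomes informed (pull), each such transmission succeeding independently with probability $q$. $I_t$ is the set of vertices informed at the beginning of round $t$; probabilities are conditional on $I_t$. An expander sequence is a sequence $(G_n)$ of connected graphs, $G_n$ on $n$ vertices with minimum degree $\delta_n$, maximum degree $\Delta_n$, and $\lambda_n=\max\{|\mu_2|,|\mu_n|\}$ (adjacency eigenvalues), with $\Delta_n/\delta_n=1+o(1)$ and $\lambda_n=o(\Delta_n)$. whp means with probability $1-o(1)$ as $n\to\infty$; natural log. *)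

theory Defs
  imports "HOL-Probability.Probability" "HOL-Library.Landau_Symbols"
    "Jordan_Normal_Form.Char_Poly"
begin

definition simple_graph :: "nat \<Rightarrow> (nat \<Rightarrow> nat \<Rightarrow> bool) \<Rightarrow> bool" where
  "simple_graph n E \<longleftrightarrow> (\<forall>u v. E u v \<longrightarrow> u < n \<and> v < n) \<and>
     (\<forall>u v. E u v \<longrightarrow> E v u) \<and> (\<forall>u. \<not> E u u)"

definition nbrs :: "nat \<Rightarrow> (nat \<Rightarrow> nat \<Rightarrow> bool) \<Rightarrow> nat \<Rightarrow> nat set" where
  "nbrs n E v = {u. u < n \<and> E v u}"

definition deg :: "nat \<Rightarrow> (nat \<Rightarrow> nat \<Rightarrow> bool) \<Rightarrow> nat \<Rightarrow> nat" where
  "deg n E v = card (nbrs n E v)"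

definition min_deg :: "nat \<Rightarrow> (nat \<Rightarrow> nat \<Rightarrow> bool) \<Rightarrow> nat" where
  "min_deg n E = Min (deg n E ` {..<n})"

definition max_deg :: "nat \<Rightarrow> (nat \<Rightarrow> nat \<Rightarrow> bool) \<Rightarrow> nat" where
  "max_deg n E = Max (deg n E ` {..<n})"

definition connected_graph :: "nat \<Rightarrow> (nat \<Rightarrow> nat \<Rightarrow> bool) \<Rightarrow> bool" where
  "connected_graph n E \<longleftrightarrow> (\<forall>u<n. \<forall>v<n. (u, v) \<in> {(x, y). E x y}\<^sup>*)"

definition adj_matrix :: "nat \<Rightarrow> (nat \<Rightarrow> nat \<Rightarrow> bool) \<Rightarrow> real mat" where
  "adj_matrix n E = mat n n (\<lambda>(i, j). if E i j then 1 else 0)"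

text \<open>The adjacency eigenvalues mu_1 >= mu_2 >= ... >= mu_n, listed with multiplicity
  (the adjacency matrix is real symmetric, so its characteristic polynomial splits over the reals).\<close>

definition adj_eigenvalues :: "nat \<Rightarrow> (nat \<Rightarrow> nat \<Rightarrow> bool) \<Rightarrow> real list" where
  "adj_eigenvalues n E = (THE xs. length xs = n \<and> sorted_wrt (\<ge>) xs \<and>
      char_poly (adj_matrix n E) = (\<Prod>\<mu>\<leftarrow>xs. [:- \<mu>, 1:]))"

text \<open>lambda_n = max(|mu_2|, |mu_n|)  (list indices 1 and n-1).\<close>

definition spectral_lambda :: "nat \<Rightarrow> (nat \<Rightarrow> nat \<Rightarrow> bool) \<Rightarrow> real" where
  "spectral_lambda n E = max \<bar>adj_eigenvalues n E ! 1\<bar> \<bar>adj_eigenvalues n E ! (n - 1)\<bar>"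

definition expander_sequence :: "(nat \<Rightarrow> nat \<Rightarrow> nat \<Rightarrow> bool) \<Rightarrow> bool" where
  "expander_sequence G \<longleftrightarrow>
     (\<forall>n. simple_graph n (G n) \<and> connected_graph n (G n)) \<and>
     ((\<lambda>n. real (max_deg n (G n)) / real (min_deg n (G n))) \<longlonglongrightarrow> 1) \<and>
     (\<lambda>n. spectral_lambda n (G n)) \<in> o(\<lambda>n. real (max_deg n (G n)))"

text \<open>In one round, every vertex v picks a uniformly random neighbour w v (an isolated vertex,
  which only occurs for n = 1, picks itself, which has no effect) and a coin b v that is True
  with probability q. The transmission along the edge chosen by v succeeds iff b v:
  push if v is informed, pull if w v is informed.\<close>

definition vertex_choice :: "nat \<Rightarrow> (nat \<Rightarrow> nat \<Rightarrow> bool) \<Rightarrow> real \<Rightarrow> nat \<Rightarrow> (nat \<times> bool) pmf" where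
  "vertex_choice n E q v =
     pair_pmf (if nbrs n E v = {} then return_pmf v else pmf_of_set (nbrs n E v)) (bernoulli_pmf q)"

definition pp_update :: "nat \<Rightarrow> nat set \<Rightarrow> (nat \<Rightarrow> nat \<times> bool) \<Rightarrow> nat set" where
  "pp_update n I ch = I \<union> {fst (ch v) |v. v \<in> I \<and> v < n \<and> snd (ch v)}
                        \<union> {v. v < n \<and> fst (ch v) \<in> I \<and> snd (ch v)}"

definition pp_round :: "nat \<Rightarrow> (nat \<Rightarrow> nat \<Rightarrow> bool) \<Rightarrow> real \<Rightarrow> nat set \<Rightarrow> nat set pmf" where
  "pp_round n E q I = map_pmf (pp_update n I) (Pi_pmf {..<n} (0, False) (vertex_choice n E q))"

definition pp_rounds :: "nat \<Rightarrow> (nat \<Rightarrow> nat \<Rightarrow> bool) \<Rightarrow> real \<Rightarrow> nat \<Rightarrow> nat set \<Rightarrow> nat set pmf" where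
  "pp_rounds n E q k I = ((\<lambda>p. bind_pmf p (pp_round n E q)) ^^ k) (return_pmf I)"

end

theory Submission
  imports Defs "Jordan_Normal_Form.Schur_Decomposition"
begin

text \<open>
  Call a vertex v untouched during k rounds if no successful transmission in these rounds
  uses an edge chosen by v or an edge pointing to v; an untouched vertex outside I stays
  uninformed. All choices are independent, so v is untouched with probability at least
  ((1 - q) (1 - q/\<delta>)^\<Delta>)^k, which for k = c \<tau> is at least n^(\<gamma> - 1) for some \<gamma> > 0
  once \<delta> \<rightarrow> \<infinity> and \<Delta>/\<delta> \<rightarrow> 1. Hence a set W of n^(1 - \<gamma>/2)/4 uninformed vertices
  contains at least n^(\<gamma>/2)/4 untouched ones in expectation. Two vertices are untouched
  independently if they are not adjacent, and up to a factor (1 - q/\<delta>)^(-2k) = 1 + o(1)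
  if \<Delta> \<ge> n^(\<gamma>/2). The second moment inequality
  P(\<Union> S v) \<ge> (\<Sigma> P(S v))^2 / \<Sigma>\<Sigma> P(S v \<inter> S v') then shows that whp some vertex of W is
  untouched, where W is the whole uninformed set if \<Delta> is large and an independent subset
  of it of size n/(2(\<Delta>+1)) otherwise. Finally, \<delta> \<rightarrow> \<infinity> follows from the spectral
  condition via n \<delta> \<le> tr A^2 = \<Sigma> \<mu>_i^2 \<le> \<Delta>^2 + (n - 1) \<lambda>^2.
\<close>

section \<open>The minimum degree of an expander sequence tends to infinity\<close>

lemma adj_matrix_carrier: "adj_matrix n E \<in> carrier_mat n n"
  unfolding adj_matrix_def by auto

lemma adj_matrix_index: "i < n \<Longrightarrow> j < n \<Longrightarrow> adj_matrix n E $$ (i,j) = (if E i j then 1 else 0)"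
  unfolding adj_matrix_def by auto

lemma real_symmetric_eigenvalue_real:
  fixes A :: "real mat" and a :: complex
  assumes A: "A \<in> carrier_mat n n"
    and sym: "\<And>i j. i < n \<Longrightarrow> j < n \<Longrightarrow> A $$ (i,j) = A $$ (j,i)"
    and ev: "eigenvalue (of_real_hom.mat_hom A) a"
  shows "Im a = 0"
proof -
  let ?B = "of_real_hom.mat_hom A :: complex mat"
  have B: "?B \<in> carrier_mat n n" using A by auto
  from ev obtain v where v: "v \<in> carrier_vec n" "v \<noteq> 0\<^sub>v n" "?B *\<^sub>v v = a \<cdot>\<^sub>v v"
    unfolding eigenvalue_def eigenvector_def using B by auto
  have Bv: "(\<Sum>j<n. complex_of_real (A $$ (i,j)) * v $ j) = a * v $ i" if i: "i < n" for i
  proof -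
    have "(?B *\<^sub>v v) $ i = a * v $ i" using v(3) v(1) i by (metis index_smult_vec(1) carrier_vecD)
    moreover have "(?B *\<^sub>v v) $ i = (\<Sum>j<n. complex_of_real (A $$ (i,j)) * v $ j)"
      using A i v(1) by (auto simp: mult_mat_vec_def scalar_prod_def atLeast0LessThan intro!: sum.cong)
    ultimately show ?thesis by simp
  qed
  \<comment> \<open>s = v* A v equals a |v|^2 and is its own conjugate.\<close>
  define s where "s = (\<Sum>i<n. cnj (v $ i) * (\<Sum>j<n. complex_of_real (A $$ (i,j)) * v $ j))"
  define N where "N = (\<Sum>i<n. (cmod (v $ i))^2)"
  have s1: "s = a * complex_of_real N"
  proof -
    have "s = (\<Sum>i<n. a * (v $ i * cnj (v $ i)))"
      unfolding s_def using Bv by (simp add: mult.commute mult.left_commute)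
    also have "\<dots> = a * complex_of_real N" unfolding N_def
      by (simp add: sum_distrib_left) (metis (no_types) complex_norm_square of_real_power)
    finally show ?thesis .
  qed
  have "cnj s = (\<Sum>i<n. v $ i * (\<Sum>j<n. complex_of_real (A $$ (i,j)) * cnj (v $ j)))"
    unfolding s_def by (simp add: sum_distrib_left)
  also have "\<dots> = (\<Sum>i<n. \<Sum>j<n. cnj (v $ j) * complex_of_real (A $$ (j,i)) * v $ i)"
    by (auto simp: sum_distrib_left sym intro!: sum.cong)
  also have "\<dots> = s"
    unfolding s_def by (subst sum.swap) (simp add: sum_distrib_left mult.assoc)
  finally have "cnj s = s" .
  hence "Im s = 0" by (metis Reals_cnj_iff complex_is_Real_iff)
  have "N > 0"
  proof -
    obtain i where i: "i < n" "v $ i \<noteq> 0"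
      using v(1,2) by (metis carrier_vecD eq_vecI index_zero_vec(1,2))
    have "(cmod (v $ i))^2 \<le> N" unfolding N_def
      by (rule member_le_sum) (use i in auto)
    moreover have "(cmod (v $ i))^2 > 0" using i by simp
    ultimately show ?thesis by linarith
  qed
  have "Im s = Im a * N" using s1 by simp
  with \<open>Im s = 0\<close> \<open>N > 0\<close> show ?thesis by simp
qed

lemma real_symmetric_char_poly_splits:
  fixes A :: "real mat"
  assumes A: "A \<in> carrier_mat n n"
    and sym: "\<And>i j. i < n \<Longrightarrow> j < n \<Longrightarrow> A $$ (i,j) = A $$ (j,i)"
  shows "\<exists>rs. length rs = n \<and> char_poly A = (\<Prod>r\<leftarrow>rs. [:- r, 1:])"
proof -
  interpret rp: map_poly_inj_idom_hom "of_real :: real \<Rightarrow> complex" ..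
  let ?B = "of_real_hom.mat_hom A :: complex mat"
  have B: "?B \<in> carrier_mat n n" using A by auto
  obtain as where as: "char_poly ?B = (\<Prod>a\<leftarrow>as. [:- a, 1:])" "length as = n"
    using char_poly_factorized[OF B] by auto
  have re: "complex_of_real (Re a) = a" if a: "a \<in> set as" for a
  proof -
    have "poly (char_poly ?B) a = 0" unfolding as(1) by (rule linear_poly_root[OF a])
    hence "eigenvalue ?B a" using eigenvalue_root_char_poly[OF B] by simp
    hence "Im a = 0" using real_symmetric_eigenvalue_real[OF A] sym by blast
    thus ?thesis by (simp add: complex_eq_iff)
  qed
  define rs where "rs = map Re as"
  have as_rs: "as = map complex_of_real rs" unfolding rs_def using re
    by (induct as) auto
  have "char_poly ?B = map_poly of_real (char_poly A)"
    by (rule of_real_hom.char_poly_hom[OF A])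
  hence "map_poly of_real (char_poly A) = char_poly ?B" by simp
  also have "\<dots> = (\<Prod>r\<leftarrow>rs. [:- complex_of_real r, 1:])" unfolding as(1) as_rs
    by (simp add: o_def)
  also have "\<dots> = map_poly of_real (\<Prod>r\<leftarrow>rs. [:- r, 1:])"
    by (simp add: rp.hom_prod_list o_def)
  finally have "char_poly A = (\<Prod>r\<leftarrow>rs. [:- r, 1:])" by (rule rp.injectivity)
  moreover have "length rs = n" using as(2) unfolding rs_def by simp
  ultimately show ?thesis by blast
qed

lemma order_prod_linear_factors:
  fixes xs :: "real list"
  shows "Polynomial.order x (\<Prod>r\<leftarrow>xs. [:- r, 1:]) = count (mset xs) x"
proof -
  have "Polynomial.order x (\<Prod>r\<leftarrow>xs. [:- r, 1:]) = sum_list (map (Polynomial.order x) (map (\<lambda>r. [:- r, 1:]) xs))"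
    by (rule order_prod_list) auto
  also have "\<dots> = count (mset xs) x"
    by (induct xs) (auto simp: order_linear')
  finally show ?thesis .
qed

lemma sorted_desc_eq_if_mset_eq:
  fixes xs ys :: "real list"
  assumes "sorted_wrt (\<ge>) xs" "sorted_wrt (\<ge>) ys" "mset xs = mset ys"
  shows "xs = ys"
proof -
  have "sorted (rev xs)" "sorted (rev ys)" using assms(1,2) by (simp_all add: sorted_wrt_rev)
  hence "sort (rev ys) = rev xs" "sort (rev ys) = rev ys"
    using assms(3) by (auto intro!: properties_for_sort)
  thus ?thesis by simp
qed

lemma adj_eigenvalues_spec:
  assumes "simple_graph n E"
  shows "length (adj_eigenvalues n E) = n \<and> sorted_wrt (\<ge>) (adj_eigenvalues n E) \<and>
      char_poly (adj_matrix n E) = (\<Prod>\<mu>\<leftarrow>adj_eigenvalues n E. [:- \<mu>, 1:])"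
proof -
  let ?P = "\<lambda>xs. length xs = n \<and> sorted_wrt (\<ge>) xs \<and>
      char_poly (adj_matrix n E) = (\<Prod>\<mu>\<leftarrow>xs. [:- \<mu>, 1:])"
  have sym: "adj_matrix n E $$ (i,j) = adj_matrix n E $$ (j,i)" if "i < n" "j < n" for i j
    using assms that unfolding simple_graph_def by (auto simp: adj_matrix_index)
  obtain rs where rs: "length rs = n" "char_poly (adj_matrix n E) = (\<Prod>r\<leftarrow>rs. [:- r, 1:])"
    using real_symmetric_char_poly_splits[OF adj_matrix_carrier sym] by blast
  define xs where "xs = rev (sort rs)"
  have "mset xs = mset rs" unfolding xs_def by simp
  hence "(\<Prod>r\<leftarrow>xs. [:- r, 1:]) = (\<Prod>r\<leftarrow>rs. [:- r, 1:])"
    by (metis mset_map prod_mset_prod_list)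
  moreover have "sorted_wrt (\<ge>) xs" unfolding xs_def by (simp add: sorted_wrt_rev)
  moreover have "length xs = n" unfolding xs_def using rs by simp
  ultimately have ex: "?P xs" using rs by simp
  have uniq: "ys = xs" if "?P ys" for ys
  proof (rule sorted_desc_eq_if_mset_eq)
    show "sorted_wrt (\<ge>) ys" "sorted_wrt (\<ge>) xs" using that ex by auto
    show "mset ys = mset xs"
    proof (rule multiset_eqI)
      fix x
      have "count (mset ys) x = Polynomial.order x (char_poly (adj_matrix n E))"
        using that by (simp add: order_prod_linear_factors)
      also have "\<dots> = count (mset xs) x" using ex by (simp add: order_prod_linear_factors)
      finally show "count (mset ys) x = count (mset xs) x" .
    qed
  qed
  have "?P (THE xs. ?P xs)" by (rule theI[of ?P xs]) (use ex uniq in auto)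
  thus ?thesis unfolding adj_eigenvalues_def .
qed

definition mat_trace :: "real mat \<Rightarrow> real" where
  "mat_trace M = (\<Sum>i<dim_row M. M $$ (i,i))"

lemma mat_trace_mult:
  assumes X: "X \<in> carrier_mat n n" and Y: "Y \<in> carrier_mat n n"
  shows "mat_trace (X * Y) = (\<Sum>i<n. \<Sum>j<n. X $$ (i,j) * Y $$ (j,i))"
proof -
  have "(X * Y) $$ (i,i) = (\<Sum>j<n. X $$ (i,j) * Y $$ (j,i))" if "i < n" for i
    using X Y that by (simp add: index_mult_mat scalar_prod_def atLeast0LessThan)
  thus ?thesis using X unfolding mat_trace_def by simp
qed

lemma mat_trace_mult_comm:
  assumes X: "X \<in> carrier_mat n n" and Y: "Y \<in> carrier_mat n n"
  shows "mat_trace (X * Y) = mat_trace (Y * X)"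
  unfolding mat_trace_mult[OF X Y] mat_trace_mult[OF Y X]
  by (subst sum.swap) (simp add: mult.commute)

lemma mat_trace_similar:
  assumes "similar_mat_wit A B P Q"
  shows "mat_trace A = mat_trace B"
proof -
  define n where "n = dim_row A"
  note sim = similar_mat_witD[OF n_def assms]
  have "mat_trace A = mat_trace (P * (B * Q))"
    using sim by (simp add: assoc_mult_mat[of P n n B n Q n])
  also have "\<dots> = mat_trace ((B * Q) * P)"
    using sim by (intro mat_trace_mult_comm) auto
  also have "\<dots> = mat_trace (B * (Q * P))"
    using sim by (simp add: assoc_mult_mat[of B n n Q n P n])
  finally show ?thesis using sim by simp
qed

lemma mat_trace_square_upper_triangular:
  assumes B: "B \<in> carrier_mat n n" and ut: "upper_triangular B"
  shows "mat_trace (B * B) = (\<Sum>i<n. (B $$ (i,i))^2)"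
proof -
  have "(\<Sum>j<n. B $$ (i,j) * B $$ (j,i)) = (B $$ (i,i))^2" if i: "i < n" for i
  proof -
    have "B $$ (i,j) * B $$ (j,i) = 0" if "j < n" "j \<noteq> i" for j
      using ut B i that by (cases "j < i") (auto simp: upper_triangular_def)
    hence "(\<Sum>j<n. B $$ (i,j) * B $$ (j,i)) = (\<Sum>j\<in>{i}. B $$ (i,j) * B $$ (j,i))"
      using i by (intro sum.mono_neutral_right) auto
    thus ?thesis by (simp add: power2_eq_square)
  qed
  thus ?thesis unfolding mat_trace_mult[OF B B] by simp
qed

lemma mat_trace_square_eigenvalues:
  fixes A :: "real mat"
  assumes A: "A \<in> carrier_mat n n"
    and cp: "char_poly A = (\<Prod>r\<leftarrow>xs. [:- r, 1:])" and len: "length xs = n"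
  shows "mat_trace (A * A) = (\<Sum>i<n. (xs ! i)^2)"
proof -
  obtain B P Q where "schur_decomposition A xs = (B,P,Q)"
    by (cases "schur_decomposition A xs") auto
  from schur_decomposition[OF A cp this]
  have sim: "similar_mat_wit A B P Q" and ut: "upper_triangular B" and dg: "diag_mat B = xs"
    by auto
  have B: "B \<in> carrier_mat n n" using similar_mat_witD2[OF A sim] by simp
  have "mat_trace (A * A) = mat_trace (B * B)"
    using mat_trace_similar[OF similar_mat_wit_pow[OF sim, of 2]] A B
    by (simp add: numeral_2_eq_2)
  also have "\<dots> = (\<Sum>i<n. (B $$ (i,i))^2)" by (rule mat_trace_square_upper_triangular[OF B ut])
  also have "\<dots> = (\<Sum>i<n. (xs ! i)^2)"
    using dg B by (auto simp: diag_mat_def)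
  finally show ?thesis .
qed

lemma deg_eq_sum_adjacent: "u < n \<Longrightarrow> real (deg n E u) = (\<Sum>j<n. if E u j then 1 else 0)"
  unfolding deg_def nbrs_def
  by (simp add: sum.If_cases Int_def conj_commute)

lemma mat_trace_adj_square:
  assumes sg: "simple_graph n E"
  shows "mat_trace (adj_matrix n E * adj_matrix n E) = (\<Sum>u<n. real (deg n E u))"
proof -
  have "mat_trace (adj_matrix n E * adj_matrix n E) =
     (\<Sum>u<n. \<Sum>j<n. adj_matrix n E $$ (u,j) * adj_matrix n E $$ (j,u))"
    by (rule mat_trace_mult[OF adj_matrix_carrier adj_matrix_carrier])
  also have "\<dots> = (\<Sum>u<n. real (deg n E u))"
  proof (rule sum.cong[OF refl])
    fix u assume u: "u \<in> {..<n}"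
    have "(\<Sum>j<n. adj_matrix n E $$ (u, j) * adj_matrix n E $$ (j, u)) = (\<Sum>j<n. if E u j then 1 else 0)"
      using sg u by (intro sum.cong refl) (auto simp: adj_matrix_index simple_graph_def)
    thus "(\<Sum>j<n. adj_matrix n E $$ (u, j) * adj_matrix n E $$ (j, u)) = real (deg n E u)"
      using deg_eq_sum_adjacent u by simp
  qed
  finally show ?thesis .
qed

lemma deg_le_max_deg: "u < n \<Longrightarrow> deg n E u \<le> max_deg n E"
  unfolding max_deg_def by (rule Max_ge) auto

lemma min_deg_le_deg: "u < n \<Longrightarrow> min_deg n E \<le> deg n E u"
  unfolding min_deg_def by (rule Min_le) auto

lemma abs_adj_eigenvalue_le_max_deg:
  assumes sg: "simple_graph n E" and root: "poly (char_poly (adj_matrix n E)) \<mu> = 0"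
  shows "\<bar>\<mu>\<bar> \<le> real (max_deg n E)"
proof -
  let ?A = "adj_matrix n E"
  have "eigenvalue ?A \<mu>" using eigenvalue_root_char_poly[OF adj_matrix_carrier] root by simp
  then obtain v where v: "v \<in> carrier_vec n" "v \<noteq> 0\<^sub>v n" "?A *\<^sub>v v = \<mu> \<cdot>\<^sub>v v"
    unfolding eigenvalue_def eigenvector_def using adj_matrix_carrier[of n E] by auto
  obtain i0 where i0: "i0 < n" "v $ i0 \<noteq> 0"
    using v(1,2) by (metis carrier_vecD eq_vecI index_zero_vec(1,2))
  have "n > 0" using i0 by simp
  obtain i where i: "i \<in> {..<n}" "\<forall>j\<in>{..<n}. \<bar>v $ j\<bar> \<le> \<bar>v $ i\<bar>"
  proof -
    let ?S = "(\<lambda>j. \<bar>v $ j\<bar>) ` {..<n}"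
    have fin: "finite ?S" "?S \<noteq> {}" using \<open>n > 0\<close> by auto
    obtain i where "i \<in> {..<n}" "\<bar>v $ i\<bar> = Max ?S" using Max_in[OF fin] by auto
    moreover have "\<forall>j\<in>{..<n}. \<bar>v $ j\<bar> \<le> Max ?S" using fin by auto
    ultimately show ?thesis using that by auto
  qed
  have pos: "\<bar>v $ i\<bar> > 0" using i i0 by force
  have eq: "\<mu> * v $ i = (\<Sum>j<n. (if E i j then 1 else 0) * v $ j)"
  proof -
    have "(?A *\<^sub>v v) $ i = \<mu> * v $ i" using v(3) v(1) i by (metis index_smult_vec(1) carrier_vecD lessThan_iff)
    moreover have "(?A *\<^sub>v v) $ i = (\<Sum>j<n. (if E i j then 1 else 0) * v $ j)"
      using i v(1) by (auto simp: mult_mat_vec_def scalar_prod_def atLeast0LessThan adj_matrix_index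
          adj_matrix_def intro!: sum.cong)
    ultimately show ?thesis by simp
  qed
  have "\<bar>\<mu>\<bar> * \<bar>v $ i\<bar> = \<bar>\<Sum>j<n. (if E i j then 1 else 0) * v $ j\<bar>"
    using eq by (metis abs_mult)
  also have "\<dots> \<le> (\<Sum>j<n. (if E i j then 1 else 0) * \<bar>v $ i\<bar>)"
    by (rule order.trans[OF sum_abs]) (rule sum_mono, use i in auto)
  also have "\<dots> = real (deg n E i) * \<bar>v $ i\<bar>"
    using deg_eq_sum_adjacent[of i n E] i by (simp add: sum_distrib_right)
  also have "\<dots> \<le> real (max_deg n E) * \<bar>v $ i\<bar>"
    using deg_le_max_deg[of i n E] i pos by (intro mult_right_mono) auto
  finally show ?thesis using pos by simp
qed

lemma min_deg_spectral_bound: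
  assumes sg: "simple_graph n E" and n: "n \<ge> 2"
  shows "real n * real (min_deg n E) \<le> real (max_deg n E)^2 + real (n - 1) * (spectral_lambda n E)^2"
proof -
  define xs where "xs = adj_eigenvalues n E"
  have spec: "length xs = n" "sorted_wrt (\<ge>) xs"
     "char_poly (adj_matrix n E) = (\<Prod>\<mu>\<leftarrow>xs. [:- \<mu>, 1:])"
    using adj_eigenvalues_spec[OF sg] unfolding xs_def by auto
  have "real n * real (min_deg n E) = (\<Sum>u<n. real (min_deg n E))" by simp
  also have "\<dots> \<le> (\<Sum>u<n. real (deg n E u))" by (intro sum_mono) (simp add: min_deg_le_deg)
  also have "\<dots> = mat_trace (adj_matrix n E * adj_matrix n E)" by (rule mat_trace_adj_square[OF sg, symmetric])
  also have "\<dots> = (\<Sum>i<n. (xs ! i)^2)" by (rule mat_trace_square_eigenvalues[OF adj_matrix_carrier spec(3) spec(1)])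
  also have "\<dots> = (xs ! 0)^2 + (\<Sum>i\<in>{1..<n}. (xs ! i)^2)"
  proof -
    have "{..<n} = insert 0 {1..<n}" using n by auto
    thus ?thesis by simp
  qed
  also have "\<dots> \<le> real (max_deg n E)^2 + (\<Sum>i\<in>{1..<n}. (spectral_lambda n E)^2)"
  proof (rule add_mono)
    have "poly (char_poly (adj_matrix n E)) (xs ! 0) = 0"
      unfolding spec(3) by (rule linear_poly_root) (use spec(1) n in auto)
    hence "\<bar>xs ! 0\<bar> \<le> real (max_deg n E)" by (rule abs_adj_eigenvalue_le_max_deg[OF sg])
    thus "(xs ! 0)^2 \<le> real (max_deg n E)^2" by (metis abs_ge_zero power2_abs power_mono)
    show "(\<Sum>i\<in>{1..<n}. (xs ! i)^2) \<le> (\<Sum>i\<in>{1..<n}. (spectral_lambda n E)^2)"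
    proof (rule sum_mono)
      fix i assume i: "i \<in> {1..<n}"
      have "xs ! i \<le> xs ! 1"
      proof (cases "i = 1")
        case False thus ?thesis using spec(1,2) i by (auto intro: sorted_wrt_nth_less)
      qed simp
      moreover have "xs ! (n - 1) \<le> xs ! i"
      proof (cases "i = n - 1")
        case False thus ?thesis using spec(1,2) i by (auto intro: sorted_wrt_nth_less)
      qed simp
      ultimately have "\<bar>xs ! i\<bar> \<le> spectral_lambda n E"
        unfolding spectral_lambda_def xs_def[symmetric] by auto
      thus "(xs ! i)^2 \<le> (spectral_lambda n E)^2" by (metis abs_ge_zero power2_abs power_mono)
    qed
  qed
  also have "\<dots> = real (max_deg n E)^2 + real (n - 1) * (spectral_lambda n E)^2" by simp
  finally show ?thesis .
qed

lemma min_deg_ge_if_spectral_lambda_small: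
  fixes M :: real
  assumes sg: "simple_graph n E" and M: "1 \<le> M" "8 * M \<le> real n" and n: "2 \<le> n"
    and d: "0 < min_deg n E" and Dd: "real (max_deg n E) \<le> 2 * real (min_deg n E)"
    and l: "(spectral_lambda n E)^2 \<le> real (max_deg n E)^2 / (8 * M)"
  shows "M \<le> real (min_deg n E)"
proof (rule ccontr)
  define d where "d = real (min_deg n E)"
  define D where "D = real (max_deg n E)"
  assume "\<not> M \<le> real (min_deg n E)"
  hence dM: "d < M" unfolding d_def by simp
  have d0: "0 < d" using d unfolding d_def by simp
  have "real n * d \<le> D^2 + real (n - 1) * (spectral_lambda n E)^2"
    using min_deg_spectral_bound[OF sg n] unfolding d_def D_def .
  also have "\<dots> \<le> D^2 + real n * (D^2 / (8 * M))"
    using l unfolding D_def by (intro add_left_mono mult_mono) auto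
  also have "\<dots> = D^2 * (1 + real n / (8 * M))" by (simp add: algebra_simps)
  also have "\<dots> \<le> (2 * d)^2 * (1 + real n / (8 * M))"
    using Dd M unfolding d_def D_def by (intro mult_right_mono power_mono) auto
  finally have "real n * d \<le> d * (4 * d + d * real n / (2 * M))"
    by (simp add: power2_eq_square algebra_simps)
  hence "real n \<le> 4 * d + d * real n / (2 * M)" using d0 by simp
  also have "\<dots> < 4 * M + M * real n / (2 * M)"
    using M d0 dM n by (intro add_strict_mono divide_strict_right_mono mult_strict_right_mono) auto
  also have "\<dots> = 4 * M + real n / 2" using M by simp
  finally show False using M by linarith
qed

lemma expander_min_deg_at_top:
  assumes ex: "expander_sequence G"
  shows "filterlim (\<lambda>n. real (min_deg n (G n))) at_top sequentially"
  unfolding filterlim_at_top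
proof
  fix M0 :: real
  define M where "M = max M0 1"
  have M: "M \<ge> 1" "M0 \<le> M" unfolding M_def by auto
  have sg: "\<And>n. simple_graph n (G n)" using ex unfolding expander_sequence_def by auto
  have ratio: "(\<lambda>n. real (max_deg n (G n)) / real (min_deg n (G n))) \<longlonglongrightarrow> 1"
    and lo: "(\<lambda>n. spectral_lambda n (G n)) \<in> o(\<lambda>n. real (max_deg n (G n)))"
    using ex unfolding expander_sequence_def by auto
  define e where "e = sqrt (1 / (8 * M))"
  have e: "e > 0" "e^2 = 1 / (8 * M)" unfolding e_def using M by auto
  have "\<forall>\<^sub>F n in sequentially. 1/2 < real (max_deg n (G n)) / real (min_deg n (G n))"
    using order_tendstoD(1)[OF ratio, of "1/2"] by simp
  moreover have "\<forall>\<^sub>F n in sequentially. real (max_deg n (G n)) / real (min_deg n (G n)) < 2"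
    using order_tendstoD(2)[OF ratio, of 2] by simp
  moreover have "\<forall>\<^sub>F n in sequentially.
      norm (spectral_lambda n (G n)) \<le> e * norm (real (max_deg n (G n)))"
    using landau_o.smallD[OF lo e(1)] .
  moreover have "\<forall>\<^sub>F n in sequentially. nat \<lceil>8 * M\<rceil> + 2 \<le> n" by (rule eventually_ge_at_top)
  ultimately show "\<forall>\<^sub>F n in sequentially. M0 \<le> real (min_deg n (G n))"
  proof eventually_elim
    case (elim n)
    have d: "0 < min_deg n (G n)" using elim(1) by (cases "min_deg n (G n) = 0") auto
    have "real (max_deg n (G n)) \<le> 2 * real (min_deg n (G n))"
      using elim(2) d by (simp add: divide_less_eq)
    moreover have "(spectral_lambda n (G n))^2 \<le> real (max_deg n (G n))^2 / (8 * M)"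
    proof -
      have "\<bar>spectral_lambda n (G n)\<bar> \<le> e * real (max_deg n (G n))" using elim(3) by simp
      hence "(spectral_lambda n (G n))^2 \<le> (e * real (max_deg n (G n)))^2"
        by (metis abs_ge_zero power2_abs power_mono)
      thus ?thesis using e(2) by (simp add: power_mult_distrib)
    qed
    moreover have "2 \<le> n" "8 * M \<le> real n" using elim(4) by linarith+
    ultimately show ?case
      using min_deg_ge_if_spectral_lambda_small[OF sg M(1)] d M(2) by force
  qed
qed

section \<open>Push&pull as a function of the random choices\<close>

primrec pp_traj :: "nat \<Rightarrow> nat set \<Rightarrow> (nat \<Rightarrow> nat \<Rightarrow> nat \<times> bool) \<Rightarrow> nat \<Rightarrow> nat set" where
  "pp_traj n I \<omega> 0 = I"
| "pp_traj n I \<omega> (Suc k) = pp_update n (pp_traj n I \<omega> k) (\<omega> k)"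

definition round_pmf :: "nat \<Rightarrow> (nat \<Rightarrow> nat \<Rightarrow> bool) \<Rightarrow> real \<Rightarrow> (nat \<Rightarrow> nat \<times> bool) pmf" where
  "round_pmf n E q = Pi_pmf {..<n} (0, False) (vertex_choice n E q)"

definition rounds_pmf ::
    "nat \<Rightarrow> (nat \<Rightarrow> nat \<Rightarrow> bool) \<Rightarrow> real \<Rightarrow> nat \<Rightarrow> (nat \<Rightarrow> nat \<Rightarrow> nat \<times> bool) pmf" where
  "rounds_pmf n E q k = Pi_pmf {..<k} (\<lambda>_. (0, False)) (\<lambda>_. round_pmf n E q)"

lemma pp_traj_cong: "(\<And>j. j < k \<Longrightarrow> \<omega> j = \<omega>' j) \<Longrightarrow> pp_traj n I \<omega> k = pp_traj n I \<omega>' k"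
  by (induct k) auto

lemma pp_rounds_Suc: "pp_rounds n E q (Suc k) I = bind_pmf (pp_rounds n E q k I) (pp_round n E q)"
  unfolding pp_rounds_def by simp

lemma pp_rounds_eq_map_traj: "pp_rounds n E q k I = map_pmf (\<lambda>\<omega>. pp_traj n I \<omega> k) (rounds_pmf n E q k)"
proof (induct k)
  case 0
  show ?case unfolding pp_rounds_def rounds_pmf_def by simp
next
  case (Suc k)
  have "rounds_pmf n E q (Suc k) = map_pmf (\<lambda>(y,f). f(k:=y)) (pair_pmf (round_pmf n E q) (rounds_pmf n E q k))"
    unfolding rounds_pmf_def lessThan_Suc by (rule Pi_pmf_insert) auto
  hence "map_pmf (\<lambda>\<omega>. pp_traj n I \<omega> (Suc k)) (rounds_pmf n E q (Suc k)) =
     map_pmf (\<lambda>(y,f). pp_update n (pp_traj n I f k) y) (pair_pmf (round_pmf n E q) (rounds_pmf n E q k))"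
    by (simp add: pmf.map_comp o_def case_prod_unfold pp_traj_cong[of k "_(k:=_)" _ n I])
  also have "\<dots> = bind_pmf (round_pmf n E q) (\<lambda>y. bind_pmf (rounds_pmf n E q k)
      (\<lambda>f. return_pmf (pp_update n (pp_traj n I f k) y)))"
    by (simp add: pair_pmf_def map_bind_pmf bind_return_pmf map_pmf_def bind_assoc_pmf)
  also have "\<dots> = bind_pmf (rounds_pmf n E q k) (\<lambda>f. bind_pmf (round_pmf n E q)
      (\<lambda>y. return_pmf (pp_update n (pp_traj n I f k) y)))"
    by (rule bind_commute_pmf)
  also have "\<dots> = pp_rounds n E q (Suc k) I"
    unfolding pp_rounds_Suc Suc pp_round_def round_pmf_def
    by (simp add: map_pmf_def bind_assoc_pmf bind_return_pmf)
  finally show ?case by simp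
qed

text \<open>Whether a choice of u avoids T does not depend on the informed set, so the events
  below are product events under the independent choices.\<close>

definition avoiding_choices :: "nat \<Rightarrow> nat set \<Rightarrow> nat \<Rightarrow> (nat \<times> bool) set" where
  "avoiding_choices n T u = {(w, b). b \<longrightarrow> (u \<notin> T \<and> w \<notin> T \<and> w < n)}"

lemma pp_traj_avoiding:
  assumes I: "I \<subseteq> {..<n}" "T \<inter> I = {}"
    and ok: "\<forall>r<k. \<forall>u<n. \<omega> r u \<in> avoiding_choices n T u"
  shows "pp_traj n I \<omega> k \<subseteq> {..<n} - T"
  using ok
proof (induct k)
  case 0 thus ?case using I by auto
next
  case (Suc k)
  hence IH: "pp_traj n I \<omega> k \<subseteq> {..<n} - T" and ch: "\<forall>u<n. \<omega> k u \<in> avoiding_choices n T u" by auto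
  show ?case
  proof
    fix x assume "x \<in> pp_traj n I \<omega> (Suc k)"
    hence "x \<in> pp_traj n I \<omega> k \<or> (\<exists>v. x = fst (\<omega> k v) \<and> v \<in> pp_traj n I \<omega> k \<and> v < n \<and> snd (\<omega> k v))
         \<or> (x < n \<and> fst (\<omega> k x) \<in> pp_traj n I \<omega> k \<and> snd (\<omega> k x))"
      by (auto simp: pp_update_def)
    thus "x \<in> {..<n} - T"
    proof (elim disjE exE conjE)
      fix v assume "x = fst (\<omega> k v)" "v \<in> pp_traj n I \<omega> k" "v < n" "snd (\<omega> k v)"
      thus ?thesis using ch by (cases "\<omega> k v") (auto simp: avoiding_choices_def)
    next
      assume "x < n" "fst (\<omega> k x) \<in> pp_traj n I \<omega> k" "snd (\<omega> k x)"
      thus ?thesis using ch by (cases "\<omega> k x") (auto simp: avoiding_choices_def)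
    qed (use IH in auto)
  qed
qed

definition avoid_prob :: "nat \<Rightarrow> (nat \<Rightarrow> nat \<Rightarrow> bool) \<Rightarrow> real \<Rightarrow> nat set \<Rightarrow> nat \<Rightarrow> real" where
  "avoid_prob n E q T u = (if u \<in> T then 1 - q else 1 - q * real (card (nbrs n E u \<inter> T)) / real (deg n E u))"

lemma nbrs_subset: "nbrs n E u \<subseteq> {..<n}" unfolding nbrs_def by auto
lemma finite_nbrs[simp]: "finite (nbrs n E u)" using finite_subset[OF nbrs_subset] by auto

lemma nbrs_sym: "simple_graph n E \<Longrightarrow> u < n \<Longrightarrow> v \<in> nbrs n E u \<longleftrightarrow> u \<in> nbrs n E v"
  unfolding simple_graph_def nbrs_def by auto

lemma card_nbrs_Int_singleton: "card (nbrs n E u \<inter> {v}) = (if v \<in> nbrs n E u then 1 else 0)"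
  by auto

lemma card_nbrs_Int_pair: "v \<noteq> v' \<Longrightarrow> card (nbrs n E u \<inter> {v, v'}) =
   (if v \<in> nbrs n E u then 1 else 0) + (if v' \<in> nbrs n E u then 1 else 0)"
  by (cases "v \<in> nbrs n E u"; cases "v' \<in> nbrs n E u") (auto simp: Int_insert_right)

lemma prob_avoiding_choices:
  assumes N: "nbrs n E u \<noteq> {}" and q: "0 \<le> q" "q \<le> 1"
  shows "measure_pmf.prob (vertex_choice n E q u) (avoiding_choices n T u) = avoid_prob n E q T u"
proof -
  let ?N = "nbrs n E u"
  let ?S = "{w. u \<notin> T \<and> w \<notin> T \<and> w < n}"
  have vc: "vertex_choice n E q u = pair_pmf (pmf_of_set ?N) (bernoulli_pmf q)"
    unfolding vertex_choice_def using N by simp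
  have split: "avoiding_choices n T u = (UNIV \<times> {False}) \<union> (?S \<times> {True})"
    unfolding avoiding_choices_def by auto
  have "measure_pmf.prob (vertex_choice n E q u) (avoiding_choices n T u) =
      measure_pmf.prob (vertex_choice n E q u) (UNIV \<times> {False}) +
      measure_pmf.prob (vertex_choice n E q u) (?S \<times> {True})"
    unfolding split by (rule measure_pmf.finite_measure_Union) auto
  also have "measure_pmf.prob (vertex_choice n E q u) (UNIV \<times> {False}) = 1 - q"
    unfolding vc using q by (subst measure_pmf_prob_product) (auto simp: measure_pmf_single)
  also have "measure_pmf.prob (vertex_choice n E q u) (?S \<times> {True}) =
      measure_pmf.prob (pmf_of_set ?N) ?S * q"
    unfolding vc using q by (subst measure_pmf_prob_product) (auto simp: measure_pmf_single)
  also have "measure_pmf.prob (pmf_of_set ?N) ?S = real (card (?N \<inter> ?S)) / real (card ?N)"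
    by (rule measure_pmf_of_set) (use N in auto)
  finally have eq: "measure_pmf.prob (vertex_choice n E q u) (avoiding_choices n T u) =
      1 - q + real (card (?N \<inter> ?S)) / real (card ?N) * q" .
  show ?thesis
  proof (cases "u \<in> T")
    case True thus ?thesis using eq by (simp add: avoid_prob_def)
  next
    case False
    have "?N \<inter> ?S = ?N - (?N \<inter> T)" using False nbrs_subset[of n E u] by auto
    hence "card (?N \<inter> ?S) = card ?N - card (?N \<inter> T)" by (simp add: card_Diff_subset)
    hence "real (card (?N \<inter> ?S)) = real (card ?N) - real (card (?N \<inter> T))"
      by (simp add: card_mono of_nat_diff)
    moreover have "card ?N > 0" using N by (simp add: card_gt_0_iff)
    ultimately have "real (card (?N \<inter> ?S)) / real (card ?N) = 1 - real (card (?N \<inter> T)) / real (card ?N)"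
      by (metis (no_types, lifting) add_diff_cancel_left' diff_divide_distrib div_self
          of_nat_0_less_iff order_less_irrefl)
    hence "measure_pmf.prob (vertex_choice n E q u) (avoiding_choices n T u) =
      1 - q + (1 - real (card (?N \<inter> T)) / real (card ?N)) * q" using eq by simp
    thus ?thesis using False unfolding deg_def avoid_prob_def by (simp add: algebra_simps)
  qed
qed

lemma prob_round_avoiding:
  assumes "\<And>u. u < n \<Longrightarrow> nbrs n E u \<noteq> {}" and "0 \<le> q" "q \<le> 1"
  shows "measure_pmf.prob (round_pmf n E q) (Pi {..<n} (avoiding_choices n T)) =
     (\<Prod>u<n. avoid_prob n E q T u)"
  unfolding round_pmf_def using assms
  by (subst measure_Pi_pmf_Pi) (auto intro!: prod.cong simp: prob_avoiding_choices)

lemma prob_rounds_avoiding: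
  "measure_pmf.prob (rounds_pmf n E q k) (Pi {..<k} (\<lambda>_. Pi {..<n} (avoiding_choices n T))) =
     measure_pmf.prob (round_pmf n E q) (Pi {..<n} (avoiding_choices n T)) ^ k"
  unfolding rounds_pmf_def by (subst measure_Pi_pmf_Pi) auto

lemma avoiding_choices_Int:
  "avoiding_choices n {v} u \<inter> avoiding_choices n {v'} u = avoiding_choices n {v, v'} u"
  unfolding avoiding_choices_def by auto

section \<open>Lower bound by the second moment method\<close>

lemma pmf_integrable_indicator[simp]: "integrable (measure_pmf M) (indicator A :: 'a \<Rightarrow> real)"
  by (rule integrable_real_indicator) (auto simp: measure_pmf.emeasure_finite less_top[symmetric])

lemma prob_union_second_moment:
  fixes M :: "'a pmf" and S :: "'b \<Rightarrow> 'a set"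
  assumes W: "finite W"
  shows "(\<Sum>v\<in>W. measure_pmf.prob M (S v))^2 \<le>
     measure_pmf.prob M (\<Union>v\<in>W. S v) * (\<Sum>v\<in>W. \<Sum>v'\<in>W. measure_pmf.prob M (S v \<inter> S v'))"
proof -
  define Y where "Y = (\<Union>v\<in>W. S v)"
  define a where "a = (\<Sum>v\<in>W. measure_pmf.prob M (S v))"
  define b where "b = (\<Sum>v\<in>W. \<Sum>v'\<in>W. measure_pmf.prob M (S v \<inter> S v'))"
  define p where "p = measure_pmf.prob M Y"
  \<comment> \<open>Cauchy-Schwarz: E[(X - t 1_Y)^2] \<ge> 0 for X = \<Sigma>v. 1_(S v), applied at t = a/p.\<close>
  have key: "0 \<le> b - 2 * t * a + t^2 * p" for t :: real
  proof -
    define F where "F = (\<lambda>x. (\<Sum>v\<in>W. \<Sum>v'\<in>W. indicator (S v \<inter> S v') x)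
        - 2 * t * (\<Sum>v\<in>W. indicator (S v) x) + t^2 * indicator Y x :: real)"
    have F: "F x = ((\<Sum>v\<in>W. indicator (S v) x) - t * indicator Y x)^2" for x
    proof (cases "x \<in> Y")
      case True
      have "(\<Sum>v\<in>W. \<Sum>v'\<in>W. indicator (S v \<inter> S v') x :: real) = (\<Sum>v\<in>W. indicator (S v) x)^2"
        by (simp add: power2_eq_square sum_product indicator_inter_arith)
      thus ?thesis unfolding F_def using True by (simp add: power2_eq_square algebra_simps)
    next
      case False
      hence "\<forall>v\<in>W. x \<notin> S v" unfolding Y_def by auto
      thus ?thesis unfolding F_def using False by (simp add: indicator_def)
    qed
    have "0 \<le> integral\<^sup>L M F" by (rule integral_nonneg_AE) (simp add: F)
    also have "integral\<^sup>L M F = b - 2 * t * a + t^2 * p"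
      unfolding F_def a_def b_def p_def
      by (simp add: integral_sum integrable_sum)
    finally show ?thesis .
  qed
  have ap: "a \<le> real (card W) * p"
  proof -
    have "a \<le> (\<Sum>v\<in>W. p)" unfolding a_def p_def Y_def
      by (intro sum_mono measure_pmf.finite_measure_mono) auto
    thus ?thesis by simp
  qed
  show ?thesis
  proof (cases "p = 0")
    case True
    hence "a \<le> 0" using ap by simp
    moreover have "a \<ge> 0" unfolding a_def by (simp add: sum_nonneg)
    ultimately show ?thesis unfolding a_def[symmetric] b_def[symmetric] p_def[symmetric] Y_def[symmetric]
      using True by simp
  next
    case False
    hence p: "p > 0" unfolding p_def by (simp add: zero_less_measure_iff)
    have "0 \<le> b - 2 * (a / p) * a + (a / p)^2 * p" by (rule key)
    hence "0 \<le> b * p - a^2" using p by (simp add: field_simps power2_eq_square)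
    thus ?thesis unfolding a_def[symmetric] b_def[symmetric] p_def[symmetric] Y_def[symmetric]
      by (simp add: mult.commute)
  qed
qed

lemma double_sum_le_diag_plus_square:
  fixes f :: "'a \<Rightarrow> 'a \<Rightarrow> real" and g :: "'a \<Rightarrow> real"
  assumes W: "finite W" and M: "0 \<le> M" and g: "\<And>v. v \<in> W \<Longrightarrow> 0 \<le> g v"
    and diag: "\<And>v. v \<in> W \<Longrightarrow> f v v = g v"
    and off_diag: "\<And>v v'. v \<in> W \<Longrightarrow> v' \<in> W \<Longrightarrow> v \<noteq> v' \<Longrightarrow> f v v' \<le> M * (g v * g v')"
  shows "(\<Sum>v\<in>W. \<Sum>v'\<in>W. f v v') \<le> (\<Sum>v\<in>W. g v) + M * (\<Sum>v\<in>W. g v)^2"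
proof -
  have "(\<Sum>v'\<in>W. f v v') \<le> g v + (\<Sum>v'\<in>W. M * (g v * g v'))" if v: "v \<in> W" for v
  proof -
    have "(\<Sum>v'\<in>W. f v v') = g v + (\<Sum>v'\<in>W - {v}. f v v')"
      using v W diag by (simp add: sum.remove)
    also have "(\<Sum>v'\<in>W - {v}. f v v') \<le> (\<Sum>v'\<in>W - {v}. M * (g v * g v'))"
      using v off_diag by (intro sum_mono) auto
    also have "\<dots> \<le> (\<Sum>v'\<in>W. M * (g v * g v'))"
      using W M g v by (intro sum_mono2) auto
    finally show ?thesis by simp
  qed
  hence "(\<Sum>v\<in>W. \<Sum>v'\<in>W. f v v') \<le> (\<Sum>v\<in>W. g v + (\<Sum>v'\<in>W. M * (g v * g v')))"
    by (intro sum_mono) auto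
  also have "\<dots> = (\<Sum>v\<in>W. g v) + M * (\<Sum>v\<in>W. g v)^2"
    by (simp add: sum.distrib sum_distrib_left power2_eq_square sum_product mult_ac)
  finally show ?thesis .
qed

lemma second_moment_ratio_bound:
  fixes p B s w M :: real
  assumes sm: "s^2 \<le> p * B" and B: "B \<le> s + M * s^2" and p: "0 \<le> p"
    and w: "0 < w" "w \<le> s" and M: "0 \<le> M"
  shows "1 / (1 / w + M) \<le> p"
proof -
  have s: "s > 0" using w by linarith
  have Bp: "B > 0"
    using sm p s by (smt (verit) mult_nonneg_nonpos zero_less_power)
  have "1 / (1 / w + M) \<le> 1 / (1 / s + M)"
    using w M by (intro divide_left_mono add_right_mono) (auto simp: add_pos_nonneg frac_le)
  also have "1 / (1 / s + M) = s^2 / (s + M * s^2)"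
  proof -
    have "s + M * s^2 = s * (1 + M * s)" by (simp add: algebra_simps power2_eq_square)
    hence "s^2 / (s + M * s^2) = s / (1 + M * s)" using s by (simp add: power2_eq_square)
    moreover have "0 < 1 + M * s" using s M by (simp add: add_pos_nonneg)
    ultimately show ?thesis using s by (simp add: field_simps)
  qed
  also have "\<dots> \<le> s^2 / B"
    using B Bp by (intro divide_left_mono) auto
  also have "\<dots> \<le> p" using sm Bp by (simp add: divide_le_eq)
  finally show ?thesis .
qed

definition avoiding_rounds :: "nat \<Rightarrow> nat \<Rightarrow> nat \<Rightarrow> (nat \<Rightarrow> nat \<Rightarrow> nat \<times> bool) set" where
  "avoiding_rounds n k v = Pi {..<k} (\<lambda>_. Pi {..<n} (avoiding_choices n {v}))"

lemma prob_avoiding_rounds_le_not_all_informed: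
  assumes I: "I \<subseteq> {..<n}" and W: "W \<subseteq> {..<n} - I"
  shows "measure_pmf.prob (rounds_pmf n E q k) (\<Union>v\<in>W. avoiding_rounds n k v)
    \<le> measure_pmf.prob (pp_rounds n E q k I) {J. card J < n}"
proof -
  have "card (pp_traj n I \<omega> k) < n" if "v \<in> W" "\<omega> \<in> avoiding_rounds n k v" for v \<omega>
  proof -
    have "pp_traj n I \<omega> k \<subseteq> {..<n} - {v}"
      by (rule pp_traj_avoiding) (use I W that in \<open>auto simp: avoiding_rounds_def\<close>)
    moreover have "card ({..<n} - {v}) < n" using that W by auto
    ultimately show ?thesis by (meson card_mono finite_Diff finite_lessThan le_less_trans)
  qed
  hence "(\<Union>v\<in>W. avoiding_rounds n k v) \<subseteq> (\<lambda>\<omega>. pp_traj n I \<omega> k) -` {J. card J < n}"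
    by auto
  thus ?thesis
    unfolding pp_rounds_eq_map_traj measure_map_pmf by (rule measure_pmf.finite_measure_mono) simp
qed

context
  fixes n :: nat and E :: "nat \<Rightarrow> nat \<Rightarrow> bool" and q d0 :: real
  assumes sg: "simple_graph n E" and q: "0 < q" "q < 1" and d0: "1 \<le> d0"
    and degs: "\<And>u. u < n \<Longrightarrow> d0 \<le> real (deg n E u)"
begin

lemma nbrs_nonempty: "u < n \<Longrightarrow> nbrs n E u \<noteq> {}"
  using degs[of u] d0 unfolding deg_def by auto

lemma prob_round_avoiding_eq_prod:
  "measure_pmf.prob (round_pmf n E q) (Pi {..<n} (avoiding_choices n T)) = (\<Prod>u<n. avoid_prob n E q T u)"
  using prob_round_avoiding[of n E q T] nbrs_nonempty q by simp

lemma avoid_prob_nonneg: "u < n \<Longrightarrow> 0 \<le> avoid_prob n E q T u"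
proof -
  assume u: "u < n"
  have dpos: "real (deg n E u) > 0" using degs[OF u] d0 by linarith
  have "card (nbrs n E u \<inter> T) \<le> deg n E u" unfolding deg_def by (rule card_mono) auto
  hence "real (card (nbrs n E u \<inter> T)) / real (deg n E u) \<le> 1" using dpos by simp
  hence "q * (real (card (nbrs n E u \<inter> T)) / real (deg n E u)) \<le> q * 1"
    using q by (intro mult_left_mono) auto
  thus ?thesis unfolding avoid_prob_def using q by auto
qed

lemma prod_avoid_prob_singleton_ge:
  assumes v: "v < n"
  shows "(1 - q) * (1 - q / d0) ^ max_deg n E \<le> (\<Prod>u<n. avoid_prob n E q {v} u)"
proof -
  define g where "g u = (if u = v then 1 - q else if u \<in> nbrs n E v then 1 - q / d0 else 1)" for u
  have qd: "0 \<le> 1 - q / d0" "1 - q / d0 \<le> 1" using q d0 by (auto simp: field_simps)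
  have "(\<Prod>u<n. g u) \<le> (\<Prod>u<n. avoid_prob n E q {v} u)"
  proof (rule prod_mono)
    fix u assume u: "u \<in> {..<n}"
    show "0 \<le> g u \<and> g u \<le> avoid_prob n E q {v} u"
    proof (cases "u = v")
      case True thus ?thesis unfolding g_def avoid_prob_def using q by auto
    next
      case False
      show ?thesis
      proof (cases "u \<in> nbrs n E v")
        case True
        hence "v \<in> nbrs n E u" using nbrs_sym[OF sg] u by auto
        hence f: "avoid_prob n E q {v} u = 1 - q / real (deg n E u)" unfolding avoid_prob_def using False by simp
        have "0 < real (deg n E u) * d0" using degs[of u] u d0 by (intro mult_pos_pos) auto
        hence "q / real (deg n E u) \<le> q / d0" using degs u d0 q by (intro divide_left_mono) auto
        thus ?thesis unfolding g_def f using False True qd by auto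
      next
        case nb: False
        hence "v \<notin> nbrs n E u" using nbrs_sym[OF sg] u by auto
        thus ?thesis unfolding g_def avoid_prob_def using False nb by simp
      qed
    qed
  qed
  moreover have "(\<Prod>u<n. g u) = (1 - q) * (1 - q / d0) ^ deg n E v"
  proof -
    have "{..<n} = insert v ({..<n} - {v})" using v by auto
    hence "(\<Prod>u<n. g u) = g v * (\<Prod>u\<in>{..<n} - {v}. g u)"
      by (metis finite_Diff finite_lessThan Diff_iff insertI1 prod.insert)
    also have "(\<Prod>u\<in>{..<n} - {v}. g u) = (\<Prod>u\<in>nbrs n E v. g u)"
      using sg by (intro prod.mono_neutral_right) (auto simp: g_def nbrs_def simple_graph_def)
    also have "\<dots> = (\<Prod>u\<in>nbrs n E v. 1 - q / d0)"
      using sg by (intro prod.cong) (auto simp: g_def nbrs_def simple_graph_def)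
    finally show ?thesis unfolding deg_def by (simp add: g_def)
  qed
  moreover have "(1 - q / d0) ^ max_deg n E \<le> (1 - q / d0) ^ deg n E v"
    using qd v by (intro power_decreasing) (auto simp: max_deg_def)
  ultimately show ?thesis using q by (metis (no_types, lifting) diff_ge_0_iff_ge less_eq_real_def
        mult_left_mono order_trans)
qed

lemma avoid_prob_pair_le:
  assumes v: "v < n" and v': "v' < n" and vv: "v \<noteq> v'" and u: "u < n"
  shows "avoid_prob n E q {v, v'} u \<le> avoid_prob n E q {v} u * avoid_prob n E q {v'} u *
      (if E v v' \<and> u \<in> {v, v'} then 1 / (1 - q / d0) else 1)"
proof -
  have dpos: "real (deg n E u) \<ge> d0" using degs[OF u] .
  have qd: "0 < 1 - q / d0" "1 - q / d0 \<le> 1" using q d0 by (auto simp: field_simps)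
  have key: "1 \<le> (1 - q / real (deg n E u)) * (1 / (1 - q / d0))"
  proof -
    have "0 < real (deg n E u) * d0" using dpos d0 by (intro mult_pos_pos) auto
    hence "q / real (deg n E u) \<le> q / d0" using dpos d0 q by (intro divide_left_mono) auto
    hence "1 - q / d0 \<le> 1 - q / real (deg n E u)" by simp
    thus ?thesis using qd by (simp add: field_simps)
  qed
  show ?thesis
  proof (cases "u \<in> {v, v'}")
    case True
    show ?thesis
    proof (cases "u = v")
      case uv: True
      have "E v v' \<longleftrightarrow> v' \<in> nbrs n E u" using uv v' unfolding nbrs_def by auto
      thus ?thesis using uv vv key q
        by (auto simp: avoid_prob_def card_nbrs_Int_singleton mult.assoc intro: mult_left_le[of _ "1 - q"])
    next
      case uv: False
      hence uv': "u = v'" using True by auto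
      have "E v v' \<longleftrightarrow> v \<in> nbrs n E u" using uv' v sg unfolding nbrs_def simple_graph_def by auto
      thus ?thesis using uv' vv key q
        by (auto simp: avoid_prob_def card_nbrs_Int_singleton mult.assoc intro: mult_left_le[of _ "1 - q"])
    qed
  next
    case False
    define a where "a = (if v \<in> nbrs n E u then 1 else 0 :: real)"
    define b where "b = (if v' \<in> nbrs n E u then 1 else 0 :: real)"
    define d where "d = real (deg n E u)"
    have d: "d > 0" using dpos d0 unfolding d_def by linarith
    have "avoid_prob n E q {v, v'} u = 1 - q * (a + b) / d"
      unfolding avoid_prob_def a_def b_def d_def using False vv by (auto simp: card_nbrs_Int_pair)
    moreover have "avoid_prob n E q {v} u = 1 - q * a / d" "avoid_prob n E q {v'} u = 1 - q * b / d"
      unfolding avoid_prob_def a_def b_def d_def using False by (auto simp: card_nbrs_Int_singleton)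
    moreover have "1 - q * (a + b) / d \<le> (1 - q * a / d) * (1 - q * b / d)"
    proof -
      have "0 \<le> (q * a / d) * (q * b / d)" unfolding a_def b_def using q d by auto
      thus ?thesis by (simp add: algebra_simps add_divide_distrib)
    qed
    ultimately show ?thesis using False by simp
  qed
qed

lemma prob_round_avoiding_pair_le:
  assumes v: "v < n" "v' < n" "v \<noteq> v'"
  shows "measure_pmf.prob (round_pmf n E q) (Pi {..<n} (avoiding_choices n {v, v'})) \<le>
    measure_pmf.prob (round_pmf n E q) (Pi {..<n} (avoiding_choices n {v})) *
    measure_pmf.prob (round_pmf n E q) (Pi {..<n} (avoiding_choices n {v'})) *
    (if E v v' then (1 / (1 - q / d0))^2 else 1)"
proof -
  define r where "r u = (if E v v' \<and> u \<in> {v, v'} then 1 / (1 - q / d0) else 1)" for u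
  have "(\<Prod>u<n. avoid_prob n E q {v, v'} u) \<le>
      (\<Prod>u<n. avoid_prob n E q {v} u * avoid_prob n E q {v'} u * r u)"
    unfolding r_def using v by (intro prod_mono conjI avoid_prob_nonneg avoid_prob_pair_le) auto
  also have "\<dots> = (\<Prod>u<n. avoid_prob n E q {v} u) * (\<Prod>u<n. avoid_prob n E q {v'} u) * (\<Prod>u<n. r u)"
    by (simp add: prod.distrib)
  also have "(\<Prod>u<n. r u) = (if E v v' then (1 / (1 - q / d0))^2 else 1)"
  proof (cases "E v v'")
    case True
    have "(\<Prod>u<n. r u) = (\<Prod>u\<in>{v, v'}. 1 / (1 - q / d0))"
      using True v unfolding r_def by (intro prod.mono_neutral_cong_right) auto
    thus ?thesis using True v(3) by (simp add: power2_eq_square)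
  qed (simp add: r_def)
  finally show ?thesis unfolding prob_round_avoiding_eq_prod .
qed

lemma not_all_informed_prob_ge:
  fixes I W :: "nat set" and K :: real and k :: nat
  assumes I: "I \<subseteq> {..<n}" and W: "W \<subseteq> {..<n} - I" "W \<noteq> {}" and K: "K \<ge> 1"
    and K_pair: "\<And>v v'. v \<in> W \<Longrightarrow> v' \<in> W \<Longrightarrow> v \<noteq> v' \<Longrightarrow>
        (if E v v' then (1 / (1 - q / d0))^2 else 1) \<le> K"
  shows "1 / (1 / (real (card W) * ((1 - q) * (1 - q / d0) ^ max_deg n E) ^ k) + K ^ k)
     \<le> measure_pmf.prob (pp_rounds n E q k I) {J. card J < n}"
proof -
  define a where "a = (1 - q) * (1 - q / d0) ^ max_deg n E"
  define p where "p T = measure_pmf.prob (round_pmf n E q) (Pi {..<n} (avoiding_choices n T))" for T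
  define P where "P A = measure_pmf.prob (rounds_pmf n E q k) A" for A
  define S where "S = avoiding_rounds n k"
  define s where "s = (\<Sum>v\<in>W. p {v} ^ k)"
  have finW: "finite W" using W(1) finite_subset by blast
  have a0: "a > 0" unfolding a_def using q d0 by (auto simp: field_simps)
  have p0: "0 \<le> p T" for T unfolding p_def by simp
  have PS: "P (S v \<inter> S v') = p {v, v'} ^ k" for v v'
    unfolding P_def S_def p_def avoiding_rounds_def Pi_Int avoiding_choices_Int
    by (simp add: prob_rounds_avoiding)
  have PS1: "P (S v) = p {v} ^ k" for v using PS[of v v] by simp
  have s_ge: "real (card W) * a ^ k \<le> s"
  proof -
    have "a \<le> p {v}" if "v \<in> W" for v
      unfolding a_def p_def prob_round_avoiding_eq_prod
      using prod_avoid_prob_singleton_ge that W by auto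
    hence "(\<Sum>v\<in>W. a ^ k) \<le> s" unfolding s_def using a0 by (intro sum_mono power_mono) auto
    thus ?thesis by simp
  qed
  have pair: "P (S v \<inter> S v') \<le> K ^ k * (p {v} ^ k * p {v'} ^ k)"
    if "v \<in> W" "v' \<in> W" "v \<noteq> v'" for v v'
  proof -
    have "p {v, v'} \<le> p {v} * p {v'} * K"
      using prob_round_avoiding_pair_le[of v v'] K_pair[OF that] that W p0
      unfolding p_def by (smt (verit) Diff_iff lessThan_iff mult_left_mono mult_nonneg_nonneg subsetD)
    hence "p {v, v'} ^ k \<le> (p {v} * p {v'} * K) ^ k" using p0 by (intro power_mono) auto
    thus ?thesis unfolding PS by (simp add: power_mult_distrib mult_ac)
  qed
  have B: "(\<Sum>v\<in>W. \<Sum>v'\<in>W. P (S v \<inter> S v')) \<le> s + K ^ k * s^2"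
    unfolding s_def using finW K p0 pair by (intro double_sum_le_diag_plus_square) (auto simp: PS PS1)
  have "s^2 \<le> P (\<Union>v\<in>W. S v) * (\<Sum>v\<in>W. \<Sum>v'\<in>W. P (S v \<inter> S v'))"
    using prob_union_second_moment[OF finW, of "rounds_pmf n E q k" S] PS1 unfolding s_def P_def by simp
  hence "1 / (1 / (real (card W) * a ^ k) + K ^ k) \<le> P (\<Union>v\<in>W. S v)"
    using B s_ge a0 W finW K unfolding P_def
    by (intro second_moment_ratio_bound) (auto simp: card_gt_0_iff)
  also have "\<dots> \<le> measure_pmf.prob (pp_rounds n E q k I) {J. card J < n}"
    unfolding P_def S_def by (rule prob_avoiding_rounds_le_not_all_informed[OF I W(1)])
  finally show ?thesis unfolding a_def .
qed

end

lemma exists_independent_subset: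
  assumes sg: "simple_graph n E"
  shows "finite U \<Longrightarrow> U \<subseteq> {..<n} \<Longrightarrow> \<exists>W \<subseteq> U. (\<forall>v\<in>W. \<forall>v'\<in>W. \<not> E v v') \<and>
     card U \<le> card W * (max_deg n E + 1)"
proof (induct "card U" arbitrary: U rule: less_induct)
  case (less U)
  show ?case
  proof (cases "U = {}")
    case True thus ?thesis by auto
  next
    case False
    then obtain v where v: "v \<in> U" by auto
    define U' where "U' = U - insert v (nbrs n E v)"
    have vn: "v < n" using v less.prems by auto
    have "U' \<subset> U" unfolding U'_def using v by auto
    hence "card U' < card U" using less.prems(1) by (rule psubset_card_mono[rotated])
    then obtain W' where W': "W' \<subseteq> U'" "\<forall>v\<in>W'. \<forall>v'\<in>W'. \<not> E v v'"
        "card U' \<le> card W' * (max_deg n E + 1)"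
      using less.hyps[of U'] less.prems unfolding U'_def by auto
    define W where "W = insert v W'"
    have vW': "v \<notin> W'" using W'(1) unfolding U'_def by auto
    have "finite U'" unfolding U'_def using less.prems(1) by simp
    hence finW': "finite W'" using W'(1) by (rule finite_subset[rotated])
    have noadj: "\<not> E v w \<and> \<not> E w v" if "w \<in> W'" for w
    proof -
      have "w \<in> U" "w \<notin> nbrs n E v" using that W'(1) unfolding U'_def by auto
      hence "\<not> E v w" using less.prems(2) unfolding nbrs_def by auto
      moreover have "\<not> E w v" using \<open>\<not> E v w\<close> sg unfolding simple_graph_def by auto
      ultimately show ?thesis by simp
    qed
    have indep: "\<forall>x\<in>W. \<forall>y\<in>W. \<not> E x y"
      unfolding W_def using W'(2) noadj sg unfolding simple_graph_def by auto
    have "card U \<le> card U' + card (insert v (nbrs n E v))"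
    proof -
      have "U \<subseteq> U' \<union> insert v (nbrs n E v)" unfolding U'_def by auto
      hence "card U \<le> card (U' \<union> insert v (nbrs n E v))"
        using less.prems(1) by (intro card_mono) (auto simp: U'_def)
      also have "\<dots> \<le> card U' + card (insert v (nbrs n E v))" by (rule card_Un_le)
      finally show ?thesis .
    qed
    also have "card (insert v (nbrs n E v)) \<le> max_deg n E + 1"
    proof -
      have "card (insert v (nbrs n E v)) \<le> Suc (deg n E v)" unfolding deg_def
        by (simp add: card_insert_if)
      moreover have "deg n E v \<le> max_deg n E" unfolding max_deg_def using vn by (intro Max_ge) auto
      ultimately show ?thesis by simp
    qed
    finally have "card U \<le> card W' * (max_deg n E + 1) + (max_deg n E + 1)" using W'(3) by linarith
    also have "\<dots> = card W * (max_deg n E + 1)" unfolding W_def using vW' finW' by simp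
    finally have cU: "card U \<le> card W * (max_deg n E + 1)" .
    have "W \<subseteq> U" unfolding W_def using W'(1) v unfolding U'_def by auto
    thus ?thesis using indep cU by blast
  qed
qed

lemma card_uninformed_ge:
  assumes "I \<subseteq> {..<n}" "real (card I) \<le> real n / 2"
  shows "real n / 2 \<le> real (card ({..<n} - I))"
proof -
  have "card ({..<n} - I) = n - card I" using assms(1) finite_subset by (subst card_Diff_subset) auto
  moreover have "card I \<le> n" using assms(1) by (metis card_lessThan card_mono finite_lessThan)
  ultimately show ?thesis using assms(2) by (simp add: of_nat_diff)
qed

lemma inverse_add_le_bound:
  fixes w M e :: real
  assumes "0 < w" "1 / w \<le> e" "0 \<le> M" "M \<le> 1 + e"
  shows "1 / (1 + 2 * e) \<le> 1 / (1 / w + M)"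
  using assms by (intro frac_le) (auto simp: add_pos_nonneg)

lemma pp_rounds_not_all_informed_ge:
  fixes n :: nat and E :: "nat \<Rightarrow> nat \<Rightarrow> bool" and q \<gamma> e :: real and I :: "nat set" and k :: nat
  assumes sg: "simple_graph n E" and q: "0 < q" "q < 1"
    and I: "I \<subseteq> {..<n}" "real (card I) \<le> real n / 2"
    and n1: "n \<ge> 1" and d1: "1 \<le> real (min_deg n E)" and \<gamma>: "0 < \<gamma>"
    and single: "real n powr (\<gamma> - 1) \<le> ((1 - q) * (1 - q / real (min_deg n E)) ^ max_deg n E) ^ k"
    and pair: "real (max_deg n E) \<ge> real n powr (\<gamma> / 2) \<Longrightarrow>
        ((1 / (1 - q / real (min_deg n E)))^2) ^ k \<le> 1 + e"
    and small: "4 / real n powr (\<gamma> / 2) \<le> e"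
  shows "1 / (1 + 2 * e) \<le> measure_pmf.prob (pp_rounds n E q k I) {J. card J < n}"
proof -
  define d0 where "d0 = real (min_deg n E)"
  define a where "a = (1 - q) * (1 - q / d0) ^ max_deg n E"
  define x where "x = real n"
  have x1: "x \<ge> 1" unfolding x_def using n1 by simp
  have xg: "x powr (\<gamma> / 2) \<ge> 1" using x1 \<gamma> by (simp add: ge_one_powr_ge_zero)
  have degs: "\<And>u. u < n \<Longrightarrow> d0 \<le> real (deg n E u)" unfolding d0_def using min_deg_le_deg by simp
  have d0: "1 \<le> d0" using d1 unfolding d0_def .
  have cU: "x / 2 \<le> real (card ({..<n} - I))" unfolding x_def by (rule card_uninformed_ge[OF I])
  have e: "0 \<le> e" using small xg unfolding x_def by (smt (verit) divide_pos_pos)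
  obtain W K where W: "W \<subseteq> {..<n} - I" "x powr (1 - \<gamma> / 2) / 4 \<le> real (card W)"
    and K: "1 \<le> K" "K ^ k \<le> 1 + e"
    and K_pair: "\<And>v v'. v \<in> W \<Longrightarrow> v' \<in> W \<Longrightarrow> v \<noteq> v' \<Longrightarrow>
        (if E v v' then (1 / (1 - q / d0))^2 else 1) \<le> K"
  proof (cases "real (max_deg n E) \<ge> x powr (\<gamma> / 2)")
    case True
    have "x powr (1 - \<gamma> / 2) \<le> x powr 1" using x1 \<gamma> by (intro powr_mono) auto
    hence "x powr (1 - \<gamma> / 2) / 4 \<le> real (card ({..<n} - I))" using cU x1 by simp
    moreover have "1 \<le> (1 / (1 - q / d0))^2" using q d0 by (auto simp: field_simps)
    ultimately show thesis
      using that[of "{..<n} - I" "(1 / (1 - q / d0))^2"] pair True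
      unfolding d0_def x_def by auto
  next
    case False
    \<comment> \<open>For small \<Delta> pass to an independent set, on which the events are independent.\<close>
    obtain W where W: "W \<subseteq> {..<n} - I" "\<forall>v\<in>W. \<forall>v'\<in>W. \<not> E v v'"
        "card ({..<n} - I) \<le> card W * (max_deg n E + 1)"
      using exists_independent_subset[OF sg, of "{..<n} - I"] by auto
    have "x / 2 \<le> real (card W) * (real (max_deg n E) + 1)"
      using cU W(3) by (metis (no_types, lifting) of_nat_1 of_nat_add of_nat_le_iff of_nat_mult order_trans)
    also have "\<dots> \<le> real (card W) * (2 * x powr (\<gamma> / 2))"
      using False xg by (intro mult_left_mono) auto
    finally have "x / (4 * x powr (\<gamma> / 2)) \<le> real (card W)" using xg by (simp add: divide_le_eq)
    moreover have "x / (4 * x powr (\<gamma> / 2)) = x powr (1 - \<gamma> / 2) / 4" using x1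
      by (simp add: powr_diff)
    ultimately show thesis using that[of W 1] W(1,2) e by auto
  qed
  have "x powr (\<gamma> / 2) / 4 = x powr (1 - \<gamma> / 2) / 4 * x powr (\<gamma> - 1)"
    using x1 by (simp add: powr_add[symmetric])
  also have "\<dots> \<le> real (card W) * a ^ k"
    using W(2) single x1 unfolding a_def d0_def x_def by (intro mult_mono) auto
  finally have Wa: "x powr (\<gamma> / 2) / 4 \<le> real (card W) * a ^ k" .
  have Wa_pos: "0 < real (card W) * a ^ k" using Wa xg by linarith
  have "1 / (1 + 2 * e) \<le> 1 / (1 / (real (card W) * a ^ k) + K ^ k)"
  proof (rule inverse_add_le_bound[OF Wa_pos _ _ K(2)])
    have "0 < real (card W) * a ^ k * (x powr (\<gamma> / 2) / 4)" by (rule mult_pos_pos[OF Wa_pos]) (use x1 in simp)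
    hence "1 / (real (card W) * a ^ k) \<le> 1 / (x powr (\<gamma> / 2) / 4)"
      using Wa by (intro divide_left_mono) auto
    thus "1 / (real (card W) * a ^ k) \<le> e" using small unfolding x_def by simp
  qed (use K(1) in simp)
  also have "\<dots> \<le> measure_pmf.prob (pp_rounds n E q k I) {J. card J < n}"
    using Wa_pos W(1) K K_pair unfolding a_def
    by (intro not_all_informed_prob_ge[OF sg q d0 degs I(1)]) auto
  finally show ?thesis .
qed

section \<open>Asymptotics\<close>

lemma powr_le_power_if_ln_ge:
  fixes a x c B L :: real and k :: nat
  assumes a: "0 < a" "a \<le> 1" and la: "- (B * L) \<le> ln a" and L: "0 < L"
    and x: "1 \<le> x" and c: "0 \<le> c" and k: "real k \<le> c * ln x / L"
  shows "x powr (- (c * B)) \<le> a ^ k"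
proof -
  have "x powr (- (c * B)) = exp ((c * ln x / L) * (- (B * L)))"
    using x L by (simp add: powr_def field_simps)
  also have "\<dots> \<le> exp ((c * ln x / L) * ln a)"
    using la c x L by (intro exp_mono mult_left_mono) auto
  also have "\<dots> \<le> exp (real k * ln a)"
    using k a by (intro exp_mono mult_right_mono_neg) auto
  also have "\<dots> = a ^ k" using a by (simp add: exp_of_nat_mult)
  finally show ?thesis .
qed

lemma ln_avoid_single_ge:
  fixes q L \<eta> \<rho> \<delta> :: real and D :: nat
  assumes q: "0 < q" "q < 1" and L: "L = q - ln (1 - q)"
    and \<rho>: "0 < \<rho>" "\<rho> \<le> 1" "\<rho> \<le> \<eta> * L / q"
    and \<delta>: "2 \<le> \<delta>" "2 * q / \<delta> \<le> \<rho> / 3"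
    and D: "real D \<le> (1 + \<rho> / 3) * \<delta>"
  shows "- ((1 + \<eta>) * L) \<le> ln ((1 - q) * (1 - q / \<delta>) ^ D)"
proof -
  define t where "t = q / \<delta>"
  have t: "0 < t" "t \<le> 1 / 2" "2 * t \<le> \<rho> / 3" using q \<delta> unfolding t_def by (auto simp: field_simps)
  have "real D * (t + 2 * t^2) = real D * t * (1 + 2 * t)" by (simp add: algebra_simps power2_eq_square)
  also have "\<dots> \<le> ((1 + \<rho> / 3) * \<delta>) * t * (1 + \<rho> / 3)"
    using D t by (intro mult_mono) auto
  also have "\<dots> = q * (1 + \<rho> / 3)^2" unfolding t_def using \<delta> by (simp add: power2_eq_square)
  also have "\<dots> \<le> q * (1 + \<rho>)"
    using \<rho> q by (intro mult_left_mono) (auto simp: power2_eq_square field_simps)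
  also have "\<dots> \<le> q + \<eta> * L" using \<rho>(3) q by (simp add: field_simps)
  finally have Dt: "real D * (t + 2 * t^2) \<le> q + \<eta> * L" .
  have "- t - 2 * t^2 \<le> ln (1 - t)" using ln_one_minus_pos_lower_bound[of t] t by simp
  hence "- (real D * (t + 2 * t^2)) \<le> real D * ln (1 - t)"
    using mult_left_mono[of "- t - 2 * t^2" "ln (1 - t)" "real D"] by (simp add: algebra_simps)
  moreover have "ln ((1 - q) * (1 - t) ^ D) = ln (1 - q) + real D * ln (1 - t)"
    using q t by (simp add: ln_mult ln_realpow)
  moreover have "- ((1 + \<eta>) * L) = - L - \<eta> * L" by (simp add: algebra_simps)
  ultimately show ?thesis using Dt L unfolding t_def[symmetric] by linarith
qed

lemma avoid_pair_factor_power_le: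
  fixes q L c0 \<delta> x e s :: real and k :: nat
  assumes q: "0 < q" "q < 1" and Lp: "L > 0" and c0: "0 \<le> c0"
    and \<delta>: "2 \<le> \<delta>" "x powr s / 2 \<le> \<delta>"
    and x: "1 \<le> x" and k: "real k \<le> c0 * ln x / L"
    and small: "8 * q * c0 * ln x / (L * x powr s) \<le> ln (1 + e)" and e: "0 \<le> e"
  shows "((1 / (1 - q / \<delta>))^2) ^ k \<le> 1 + e"
proof -
  define t where "t = q / \<delta>"
  have t: "0 < t" "t \<le> 1 / 2" using q \<delta> unfolding t_def by (auto simp: field_simps)
  have "ln (1 - t) \<ge> - t - 2 * t^2" using ln_one_minus_pos_lower_bound[of t] t by simp
  moreover have "2 * t^2 \<le> t" using t by (simp add: power2_eq_square)
  ultimately have l1: "- ln (1 - t) \<le> 2 * t" by simp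
  have xp: "x powr s > 0" using x by simp
  have pos: "1 / (1 - t) > 0" using t by simp
  have eq1: "((1 / (1 - t))^2) ^ k = exp (ln (1 / (1 - t))) ^ (2 * k)"
    using pos by (simp add: power_mult)
  also have "\<dots> = exp (real (2 * k) * ln (1 / (1 - t)))" by (rule exp_of_nat_mult[symmetric])
  also have "ln (1 / (1 - t)) = - ln (1 - t)" using t by (simp add: ln_div)
  finally have eq: "((1 / (1 - t))^2) ^ k = exp (real (2 * k) * (- ln (1 - t)))" .
  have "real (2 * k) * (- ln (1 - t)) \<le> (c0 * ln x / L) * (4 * t)"
  proof -
    have "real (2 * k) * (- ln (1 - t)) \<le> (2 * (c0 * ln x / L)) * (2 * t)"
      using k l1 t by (intro mult_mono) auto
    thus ?thesis by (simp add: mult_ac)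
  qed
  also have "(c0 * ln x / L) * (4 * t) \<le> 8 * q * c0 * ln x / (L * x powr s)"
  proof -
    have "t \<le> 2 * q / x powr s"
      unfolding t_def using q \<delta> xp by (simp add: field_simps)
    hence "(c0 * ln x / L) * (4 * t) \<le> (c0 * ln x / L) * (4 * (2 * q / x powr s))"
      using c0 x Lp by (intro mult_left_mono) auto
    thus ?thesis by (simp add: field_simps)
  qed
  also have "\<dots> \<le> ln (1 + e)" by (rule small)
  finally have "real (2 * k) * (- ln (1 - t)) \<le> ln (1 + e)" .
  hence "exp (real (2 * k) * (- ln (1 - t))) \<le> exp (ln (1 + e))" by simp
  also have "\<dots> = 1 + e" using e by simp
  finally have "((1 / (1 - t))^2) ^ k \<le> 1 + e" unfolding eq .
  thus ?thesis unfolding t_def .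
qed

lemma expander_eventually_avoid_single_ge:
  fixes G :: "nat \<Rightarrow> nat \<Rightarrow> nat \<Rightarrow> bool" and q c0 \<beta> :: real
  assumes ex: "expander_sequence G" and q: "0 < q" "q < 1" and c0: "0 < c0" "c0 < \<beta>"
  shows "\<forall>\<^sub>F n in sequentially. \<forall>k. real k \<le> c0 * ln (real n) / (q - ln (1 - q)) \<longrightarrow>
    real n powr (- \<beta>) \<le> ((1 - q) * (1 - q / real (min_deg n (G n))) ^ max_deg n (G n)) ^ k"
proof -
  define L where "L = q - ln (1 - q)"
  have Lp: "L > 0" unfolding L_def using q by (smt (verit) ln_less_zero_iff)
  define \<eta> where "\<eta> = \<beta> / c0 - 1"
  have \<eta>: "\<eta> > 0" and c0\<eta>: "c0 * (1 + \<eta>) = \<beta>" unfolding \<eta>_def using c0 by (auto simp: field_simps)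
  define \<rho> where "\<rho> = min 1 (\<eta> * L / q)"
  have \<rho>: "0 < \<rho>" "\<rho> \<le> 1" "\<rho> \<le> \<eta> * L / q" unfolding \<rho>_def using \<eta> Lp q by auto
  have ratio: "(\<lambda>n. real (max_deg n (G n)) / real (min_deg n (G n))) \<longlonglongrightarrow> 1"
    using ex unfolding expander_sequence_def by auto
  have "\<forall>\<^sub>F n in sequentially. max 2 (6 * q / \<rho>) \<le> real (min_deg n (G n))"
    using expander_min_deg_at_top[OF ex] unfolding filterlim_at_top by blast
  moreover have "\<forall>\<^sub>F n in sequentially.
      real (max_deg n (G n)) / real (min_deg n (G n)) < 1 + \<rho> / 3"
    using order_tendstoD(2)[OF ratio, of "1 + \<rho> / 3"] \<rho> by simp
  moreover have "\<forall>\<^sub>F n in sequentially. 1 \<le> n" by (rule eventually_ge_at_top)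
  ultimately show ?thesis
  proof eventually_elim
    case (elim n)
    define \<delta> where "\<delta> = real (min_deg n (G n))"
    have \<delta>: "2 \<le> \<delta>" "6 * q / \<rho> \<le> \<delta>" using elim(1) unfolding \<delta>_def by auto
    have \<delta>2: "2 * q / \<delta> \<le> \<rho> / 3" using \<delta> \<rho> q by (simp add: field_simps)
    have \<Delta>: "real (max_deg n (G n)) \<le> (1 + \<rho> / 3) * \<delta>"
      using elim(2) \<delta> unfolding \<delta>_def by (simp add: divide_less_eq)
    define a where "a = (1 - q) * (1 - q / \<delta>) ^ max_deg n (G n)"
    have a: "0 < a" "a \<le> 1" unfolding a_def using q \<delta>(1) by (auto intro!: mult_le_one power_le_one)
    have la: "- ((1 + \<eta>) * L) \<le> ln a"
      unfolding a_def by (rule ln_avoid_single_ge[OF q L_def \<rho> \<delta>(1) \<delta>2 \<Delta>])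
    show ?case
      using powr_le_power_if_ln_ge[OF a la Lp, of "real n" c0] elim(3) c0 c0\<eta>
      unfolding a_def \<delta>_def L_def by simp
  qed
qed

lemma expander_eventually_avoid_pair_factor_le:
  fixes G :: "nat \<Rightarrow> nat \<Rightarrow> nat \<Rightarrow> bool" and q c0 s e :: real
  assumes ex: "expander_sequence G" and q: "0 < q" "q < 1" and c0: "0 < c0"
    and s: "0 < s" and e: "0 < e"
  shows "\<forall>\<^sub>F n in sequentially. \<forall>k. real k \<le> c0 * ln (real n) / (q - ln (1 - q)) \<longrightarrow>
    real n powr s \<le> real (max_deg n (G n)) \<longrightarrow>
    ((1 / (1 - q / real (min_deg n (G n))))^2) ^ k \<le> 1 + e"
proof -
  define L where "L = q - ln (1 - q)"
  have Lp: "L > 0" unfolding L_def using q by (smt (verit) ln_less_zero_iff)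
  have ratio: "(\<lambda>n. real (max_deg n (G n)) / real (min_deg n (G n))) \<longlonglongrightarrow> 1"
    using ex unfolding expander_sequence_def by auto
  have lp: "ln (1 + e) * L / (8 * q * c0) > 0"
    using e Lp q c0 by (intro divide_pos_pos mult_pos_pos) auto
  have "\<forall>\<^sub>F n in sequentially. 2 \<le> real (min_deg n (G n))"
    using expander_min_deg_at_top[OF ex] unfolding filterlim_at_top by blast
  moreover have "\<forall>\<^sub>F n in sequentially. real (max_deg n (G n)) / real (min_deg n (G n)) < 2"
    using order_tendstoD(2)[OF ratio, of 2] by simp
  moreover have "\<forall>\<^sub>F n in sequentially. 1 \<le> n" by (rule eventually_ge_at_top)
  moreover have "\<forall>\<^sub>F n in sequentially.
      ln (real n) / real n powr s < ln (1 + e) * L / (8 * q * c0)"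
    using order_tendstoD(2)[OF lim_ln_over_power[OF s] lp] .
  ultimately show ?thesis
  proof eventually_elim
    case (elim n)
    define \<delta> where "\<delta> = real (min_deg n (G n))"
    define x where "x = real n"
    have x1: "1 \<le> x" unfolding x_def using elim(3) by simp
    have \<Delta>: "real (max_deg n (G n)) \<le> 2 * \<delta>"
      using elim(1,2) unfolding \<delta>_def by (simp add: divide_less_eq)
    have "8 * q * c0 * ln x / (L * x powr s) = (8 * q * c0 / L) * (ln x / x powr s)"
      by simp
    also have "\<dots> \<le> (8 * q * c0 / L) * (ln (1 + e) * L / (8 * q * c0))"
      using elim(4) q c0 Lp unfolding x_def by (intro mult_left_mono) auto
    also have "\<dots> = ln (1 + e)" using q c0 Lp by simp
    finally have small: "8 * q * c0 * ln x / (L * x powr s) \<le> ln (1 + e)" .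
    show ?case
    proof (intro allI impI)
      fix k assume k: "real k \<le> c0 * ln (real n) / (q - ln (1 - q))"
        and big: "real n powr s \<le> real (max_deg n (G n))"
      have "x powr s / 2 \<le> \<delta>" using big \<Delta> unfolding x_def by simp
      thus "((1 / (1 - q / real (min_deg n (G n))))^2) ^ k \<le> 1 + e"
        using avoid_pair_factor_power_le[OF q Lp _ _ _ x1 _ small] elim(1) k c0 e
        unfolding \<delta>_def x_def L_def by simp
    qed
  qed
qed

lemma nat_floor_mult_le:
  fixes c c0 y :: real
  assumes "c \<le> c0" "0 \<le> c0" "0 \<le> y"
  shows "real (nat \<lfloor>c * y\<rfloor>) \<le> c0 * y"
proof (cases "c * y < 0")
  case False
  hence "real (nat \<lfloor>c * y\<rfloor>) \<le> c * y" by simp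
  also have "\<dots> \<le> c0 * y" using assms by (intro mult_right_mono) auto
  finally show ?thesis .
qed (use assms in simp)

lemma eventually_div_powr_less:
  fixes C s e :: real
  assumes "0 < s" "0 < e"
  shows "\<forall>\<^sub>F n in sequentially. C / real n powr s < e"
proof -
  have "(\<lambda>n. C * real n powr (- s)) \<longlonglongrightarrow> C * 0"
    by (intro tendsto_mult tendsto_const tendsto_neg_powr filterlim_real_sequentially) (use assms in simp)
  from order_tendstoD(2)[OF this, of e] show ?thesis
    using assms(2) by (simp add: powr_minus_divide)
qed

lemma tendsto_one_if_eventually_ge:
  fixes P :: "nat \<Rightarrow> real"
  assumes le1: "\<And>n. P n \<le> 1"
    and ge: "\<And>e. 0 < e \<Longrightarrow> \<forall>\<^sub>F n in sequentially. 1 / (1 + e) \<le> P n"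
  shows "P \<longlonglongrightarrow> 1"
proof (rule order_tendstoI)
  fix a :: real assume "1 < a"
  thus "\<forall>\<^sub>F n in sequentially. P n < a" using le1 by (intro always_eventually) (meson le_less_trans)
next
  fix a :: real assume a: "a < 1"
  have "0 < (1 - a) * (2 - a)" using a by (intro mult_pos_pos) auto
  hence "a < 1 / (1 + (1 - a) / 2)" using a by (simp add: field_simps algebra_simps)
  thus "\<forall>\<^sub>F n in sequentially. a < P n"
    using ge[of "(1 - a) / 2"] a by (auto elim: eventually_mono)
qed

theorem lemma3p6:
  fixes G :: "nat \<Rightarrow> nat \<Rightarrow> nat \<Rightarrow> bool" and q c :: real and I :: "nat \<Rightarrow> nat set"
  assumes "expander_sequence G"
    and "0 < q" and "q < 1"
    and "\<And>n. I n \<subseteq> {..<n}"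
    and "\<And>n. real (card (I n)) \<le> real n / 2"
    and "c < 1"
  shows "(\<lambda>n. measure_pmf.prob
            (pp_rounds n (G n) q (nat \<lfloor>c * (ln (real n) / (q - ln (1 - q)))\<rfloor>) (I n))
            {J. card J < n}) \<longlonglongrightarrow> 1"
proof (rule tendsto_one_if_eventually_ge)
  note ex = assms(1) and q = assms(2,3)
  define L where "L = q - ln (1 - q)"
  have Lp: "L > 0" unfolding L_def using q by (smt (verit) ln_less_zero_iff)
  define c0 where "c0 = max c (1/2)"
  define \<gamma> where "\<gamma> = (1 - c0) / 2"
  have c0: "0 < c0" "c \<le> c0" "c0 < 1" unfolding c0_def using assms(6) by auto
  have \<gamma>: "0 < \<gamma>" "c0 < 1 - \<gamma>" unfolding \<gamma>_def using c0 by (auto simp: field_simps)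
  fix e :: real assume e: "0 < e"
  note eventually_div_powr_less[OF half_gt_zero[OF \<gamma>(1)] half_gt_zero[OF e], of 4]
  moreover note expander_eventually_avoid_single_ge[OF ex q c0(1) \<gamma>(2)]
  moreover note expander_eventually_avoid_pair_factor_le[OF ex q c0(1) half_gt_zero[OF \<gamma>(1)] half_gt_zero[OF e]]
  moreover have "\<forall>\<^sub>F n in sequentially. 1 \<le> real (min_deg n (G n))"
    using expander_min_deg_at_top[OF ex] unfolding filterlim_at_top by blast
  moreover have "\<forall>\<^sub>F n in sequentially. 1 \<le> n" by (rule eventually_ge_at_top)
  ultimately show "\<forall>\<^sub>F n in sequentially. 1 / (1 + e) \<le> measure_pmf.prob
      (pp_rounds n (G n) q (nat \<lfloor>c * (ln (real n) / (q - ln (1 - q)))\<rfloor>) (I n)) {J. card J < n}"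
  proof eventually_elim
    case (elim n)
    have "real (nat \<lfloor>c * (ln (real n) / L)\<rfloor>) \<le> c0 * (ln (real n) / L)"
      using c0 Lp elim(5) by (intro nat_floor_mult_le) auto
    hence "1 / (1 + 2 * (e / 2)) \<le> measure_pmf.prob
        (pp_rounds n (G n) q (nat \<lfloor>c * (ln (real n) / L)\<rfloor>) (I n)) {J. card J < n}"
      using elim \<gamma> unfolding L_def
      by (intro pp_rounds_not_all_informed_ge[OF _ q assms(4,5), where \<gamma> = \<gamma> and e = "e / 2"])
        (auto simp: ex[unfolded expander_sequence_def])
    thus ?case unfolding L_def by simp
  qed
qed (simp)

end
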